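(* Let $\Sigma$ be a signature and $T$ a monad on sets carrying a continuous $\Sigma$-algebra structure, and let $\Downarrow_n$ be the evaluation judgment defined below. For every closed term $M$, all $n,N\in\mathbb{N}$ and all $X,Y\in T\mathcal{V}_0$: if $M\Downarrow_n X$ and $M\Downarrow_{n+N}Y$, then $X\sqsubseteq Y$.
   Context: A signature $\Sigma$ is a set of operation symbols, each $\sigma$ with a finite arity $\alpha(\sigma)\in\mathbb{N}$. An $\omega$-complete pointed partial order ($\omega$CPPO) is a poset with a least element $\bot$ in which every $\omega$-chain $x_0\sqsubseteq x_1\sqsubseteq\cdots$ has a least upper bound; a map between $\omega$CPPOs is continuous if it is monotone and preserves lubs of $\omega$-chains. $T$ has unit $\eta$ and bind $u\texttt{>>=}f\in TY$ for $u\in TX$, $f:X\to TY$. $T$ carries a continuous $\Sigma$-algebra structure if each $TX$ is equipped with an $\omega$CPPO structure $(\sqsubseteq,\bot)$ such that bind is continuous in both arguments (maps $X\to TY$ ordered pointwise), and each $\sigma\in\Sigma$ of arity $k$ is interpreted, for every set $X$, by a continuous map $\sigma^T:(TX)^k\to TX$. Terms and values: $M,N::=\mathsf{return}\,V\mid VW\mid (M\ \mathsf{to}\ x.N)\mid\sigma(M_1,\dots,M_{\alpha(\sigma)})$, $V,W::=x\mid\lambda x.M$, modulo $\alpha$-equivalence, with capture-avoiding substitution $M[V/x]$; $\mathcal{T}_0,\mathcal{V}_0$ are the closed terms and closed values. The judgment $M\Downarrow_n X$ ($M\in\mathcal{T}_0$, $X\in T\mathcal{V}_0$) is defined inductively by: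 (bot) $M\Downarrow_0\bot$; (ret) $\mathsf{return}\,V\Downarrow_{n+1}\eta(V)$; (seq) if $M\Downarrow_n X$ and for every closed value $V$, $N[V/x]\Downarrow_n Y_V$, then $(M\ \mathsf{to}\ x.N)\Downarrow_{n+1}X\texttt{>>=}(V\mapsto Y_V)$; (app) if $M[V/x]\Downarrow_n X$ then $(\lambda x.M)V\Downarrow_{n+1}X$; (op) if $M_i\Downarrow_n X_i$ for $i=1,\dots,k$ then $\sigma(M_1,\dots,M_k)\Downarrow_{n+1}\sigma^T(X_1,\dots,X_k)$. *)

theory Defs
  imports Main
begin

class signature =
  fixes arity :: "'a \<Rightarrow> nat"

section \<open>Syntax (de Bruijn indices, so terms are identified up to alpha-equivalence)\<close>

datatype 'a tm =
    Ret "'a vl"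
  | App "'a vl" "'a vl"
  | To "'a tm" "'a tm"          \<comment> \<open>To M N  =  (M to x. N), x is index 0 in N\<close>
  | Op 'a "'a tm list"
and 'a vl =
    Var nat
  | Lam "'a tm"                  \<comment> \<open>Lam M = \<lambda>x. M, x is index 0 in M\<close>

fun ctm :: "nat \<Rightarrow> ('a::signature) tm \<Rightarrow> bool"
and cvl :: "nat \<Rightarrow> ('a::signature) vl \<Rightarrow> bool" where
  "ctm k (Ret v) = cvl k v"
| "ctm k (App v w) = (cvl k v \<and> cvl k w)"
| "ctm k (To M N) = (ctm k M \<and> ctm (Suc k) N)"
| "ctm k (Op s Ms) = (length Ms = arity s \<and> (\<forall>M\<in>set Ms. ctm k M))"
| "cvl k (Var i) = (i < k)"
| "cvl k (Lam M) = ctm (Suc k) M"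

text \<open>Substitution of a closed value V for index k (only ever used with closed V,
  so no shifting of V is needed; free indices above k are decremented).\<close>
fun subst_tm :: "nat \<Rightarrow> 'a vl \<Rightarrow> 'a tm \<Rightarrow> 'a tm"
and subst_vl :: "nat \<Rightarrow> 'a vl \<Rightarrow> 'a vl \<Rightarrow> 'a vl" where
  "subst_tm k V (Ret v) = Ret (subst_vl k V v)"
| "subst_tm k V (App v w) = App (subst_vl k V v) (subst_vl k V w)"
| "subst_tm k V (To M N) = To (subst_tm k V M) (subst_tm (Suc k) V N)"
| "subst_tm k V (Op s Ms) = Op s (map (subst_tm k V) Ms)"
| "subst_vl k V (Var i) = (if i = k then V else if i < k then Var i else Var (i - 1))"
| "subst_vl k V (Lam M) = Lam (subst_tm (Suc k) V M)"

typedef (overloaded) ('a::signature) cval = "{v :: 'a vl. cvl 0 v}"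
  by (rule exI[of _ "Lam (Ret (Var 0))"]) simp

definition omega_chain :: "('t \<Rightarrow> 't \<Rightarrow> bool) \<Rightarrow> (nat \<Rightarrow> 't) \<Rightarrow> bool" where
  "omega_chain le c \<longleftrightarrow> (\<forall>i. le (c i) (c (Suc i)))"

definition is_lub :: "('t \<Rightarrow> 't \<Rightarrow> bool) \<Rightarrow> 't set \<Rightarrow> 't \<Rightarrow> bool" where
  "is_lub le A l \<longleftrightarrow> (\<forall>x\<in>A. le x l) \<and> (\<forall>u. (\<forall>x\<in>A. le x u) \<longrightarrow> le l u)"

definition omega_cppo :: "('t \<Rightarrow> 't \<Rightarrow> bool) \<Rightarrow> 't \<Rightarrow> bool" where
  "omega_cppo le bt \<longleftrightarrow>
     (\<forall>x. le x x) \<and> (\<forall>x y z. le x y \<longrightarrow> le y z \<longrightarrow> le x z) \<and>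
     (\<forall>x y. le x y \<longrightarrow> le y x \<longrightarrow> x = y) \<and>
     (\<forall>x. le bt x) \<and>
     (\<forall>c. omega_chain le c \<longrightarrow> (\<exists>l. is_lub le (range c) l))"

definition ocont_on :: "'a set \<Rightarrow> ('a \<Rightarrow> 'a \<Rightarrow> bool) \<Rightarrow> ('b \<Rightarrow> 'b \<Rightarrow> bool) \<Rightarrow> ('a \<Rightarrow> 'b) \<Rightarrow> bool" where
  "ocont_on D le1 le2 f \<longleftrightarrow>
     (\<forall>x\<in>D. \<forall>y\<in>D. le1 x y \<longrightarrow> le2 (f x) (f y)) \<and>
     (\<forall>c l. range c \<subseteq> D \<longrightarrow> l \<in> D \<longrightarrow> omega_chain le1 c \<longrightarrow> is_lub le1 (range c) l
            \<longrightarrow> is_lub le2 (range (f \<circ> c)) (f l))"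

definition fun_le :: "('t \<Rightarrow> 't \<Rightarrow> bool) \<Rightarrow> ('v \<Rightarrow> 't) \<Rightarrow> ('v \<Rightarrow> 't) \<Rightarrow> bool" where
  "fun_le le f g \<longleftrightarrow> (\<forall>v. le (f v) (g v))"

text \<open>le, bt: the omega-CPPO structure on TV0; eta, bind: unit and bind of T at V0;
  sop s: the interpretation of s on (TV0)^(arity s), as a function on lists of that length.\<close>
definition cont_sigma_monad ::
  "('t \<Rightarrow> 't \<Rightarrow> bool) \<Rightarrow> 't \<Rightarrow> (('a::signature) cval \<Rightarrow> 't) \<Rightarrow> ('t \<Rightarrow> ('a cval \<Rightarrow> 't) \<Rightarrow> 't)
   \<Rightarrow> ('a \<Rightarrow> 't list \<Rightarrow> 't) \<Rightarrow> bool" where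
  "cont_sigma_monad le bt eta bind sop \<longleftrightarrow>
     omega_cppo le bt \<and>
     (\<forall>v f. bind (eta v) f = f v) \<and>
     (\<forall>u. bind u eta = u) \<and>
     (\<forall>u f g. bind (bind u f) g = bind u (\<lambda>v. bind (f v) g)) \<and>
     (\<forall>f. ocont_on UNIV le le (\<lambda>u. bind u f)) \<and>
     (\<forall>u. ocont_on UNIV (fun_le le) le (\<lambda>f. bind u f)) \<and>
     (\<forall>s. ocont_on {xs. length xs = arity s} (list_all2 le) le (sop s))"

inductive eval :: "'t \<Rightarrow> (('a::signature) cval \<Rightarrow> 't) \<Rightarrow> ('t \<Rightarrow> ('a cval \<Rightarrow> 't) \<Rightarrow> 't)
   \<Rightarrow> ('a \<Rightarrow> 't list \<Rightarrow> 't) \<Rightarrow> 'a tm \<Rightarrow> nat \<Rightarrow> 't \<Rightarrow> bool"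
  for bt eta bind sop where
  ev_bot: "ctm 0 M \<Longrightarrow> eval bt eta bind sop M 0 bt"
| ev_ret: "eval bt eta bind sop (Ret (Rep_cval V)) (Suc n) (eta V)"
| ev_seq: "\<lbrakk> ctm 1 N; eval bt eta bind sop M n X;
            \<forall>V. eval bt eta bind sop (subst_tm 0 (Rep_cval V) N) n (Y V) \<rbrakk>
           \<Longrightarrow> eval bt eta bind sop (To M N) (Suc n) (bind X Y)"
| ev_app: "\<lbrakk> ctm 1 M; eval bt eta bind sop (subst_tm 0 (Rep_cval V) M) n X \<rbrakk>
           \<Longrightarrow> eval bt eta bind sop (App (Lam M) (Rep_cval V)) (Suc n) X"
| ev_op: "\<lbrakk> length Ms = arity s; list_all2 (\<lambda>M X. eval bt eta bind sop M n X) Ms Xs \<rbrakk>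
           \<Longrightarrow> eval bt eta bind sop (Op s Ms) (Suc n) (sop s Xs)"

end

theory Submission
  imports Defs
begin

text \<open>Induct on the shorter derivation: a derivation with more steps of the same term must end
  with the same rule, so its premises are related by the induction hypothesis, and monotonicity of
  bind and of the operations (continuity is more than needed) propagates the order; the base case is
  the bottom element.\<close>

lemma ocont_on_monoD:
  "ocont_on D le1 le2 f \<Longrightarrow> x \<in> D \<Longrightarrow> y \<in> D \<Longrightarrow> le1 x y \<Longrightarrow> le2 (f x) (f y)"
  by (simp add: ocont_on_def)

lemma eval_mono:
  assumes refl: "\<And>x. le x x"
    and bot: "\<And>x. le bt x"
    and bind_mono: "\<And>u u' f f'. le u u' \<Longrightarrow> (\<And>v. le (f v) (f' v)) \<Longrightarrow> le (bind u f) (bind u' f')"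
    and sop_mono: "\<And>s xs ys. length xs = arity s \<Longrightarrow> list_all2 le xs ys \<Longrightarrow> le (sop s xs) (sop s ys)"
  shows "eval bt eta bind sop M n X \<Longrightarrow> eval bt eta bind sop M m Y \<Longrightarrow> n \<le> m \<Longrightarrow> le X Y"
proof (induction M n X arbitrary: m Y rule: eval.induct)
  case ev_bot
  show ?case by (rule bot)
next
  case ev_ret
  from ev_ret.prems show ?case
    by (cases rule: eval.cases) (auto simp: Rep_cval_inject refl)
next
  case (ev_seq N M n X Z)
  from ev_seq.prems show ?case
  proof (cases rule: eval.cases)
    case (ev_seq m' X' Z')
    have "le X X'"
      using ev_seq.IH(1) ev_seq ev_seq.prems(2) by simp
    moreover have "le (Z v) (Z' v)" for v
      using ev_seq.IH(2) ev_seq ev_seq.prems(2) by blast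
    ultimately show ?thesis
      using \<open>Y = bind X' Z'\<close> by (simp add: bind_mono)
  qed auto
next
  case ev_app
  from ev_app.prems show ?case
    by (cases rule: eval.cases) (auto simp: Rep_cval_inject intro: ev_app.IH)
next
  case (ev_op Ms s n Xs)
  from ev_op.prems show ?case
  proof (cases rule: eval.cases)
    case (ev_op m' Xs')
    have "list_all2 le Xs Xs'"
      using ev_op ev_op.IH ev_op.prems(2)
      by (fastforce simp: list_all2_conv_all_nth)
    moreover have "length Xs = arity s"
      using ev_op.IH ev_op.hyps(1) by (simp add: list_all2_lengthD)
    ultimately show ?thesis
      using ev_op by (auto intro: sop_mono)
  qed auto
qed

lemma cont_sigma_monad_bind_mono:
  assumes "cont_sigma_monad le bt eta bind sop" "le u u'" "\<And>v. le (f v) (f' v)"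
  shows "le (bind u f) (bind u' f')"
proof -
  have trans: "\<And>x y z. le x y \<Longrightarrow> le y z \<Longrightarrow> le x z"
    using assms(1) by (auto simp: cont_sigma_monad_def omega_cppo_def)
  have "ocont_on UNIV le le (\<lambda>u. bind u f)" "ocont_on UNIV (fun_le le) le (bind u')"
    using assms(1) by (simp_all add: cont_sigma_monad_def)
  then have "le (bind u f) (bind u' f)" "le (bind u' f) (bind u' f')"
    using assms(2,3) by (auto simp: fun_le_def elim!: ocont_on_monoD)
  then show ?thesis by (rule trans)
qed

lemma cont_sigma_monad_sop_mono:
  assumes "cont_sigma_monad le bt eta bind sop" "length xs = arity s" "list_all2 le xs ys"
  shows "le (sop s xs) (sop s ys)"
proof -
  have "ocont_on {xs. length xs = arity s} (list_all2 le) le (sop s)"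
    using assms(1) by (simp add: cont_sigma_monad_def)
  then show ?thesis
    by (rule ocont_on_monoD) (use assms(2,3) in \<open>simp_all add: list_all2_lengthD\<close>)
qed

theorem mainTheorem2:
  fixes le :: "'t \<Rightarrow> 't \<Rightarrow> bool" and bt :: 't
    and eta :: "('a::signature) cval \<Rightarrow> 't" and bind :: "'t \<Rightarrow> ('a cval \<Rightarrow> 't) \<Rightarrow> 't"
    and sop :: "'a \<Rightarrow> 't list \<Rightarrow> 't"
    and M :: "'a tm" and n N :: nat and X Y :: 't
  assumes "cont_sigma_monad le bt eta bind sop"
    and "ctm 0 M"
    and "eval bt eta bind sop M n X"
    and "eval bt eta bind sop M (n + N) Y"
  shows "le X Y"
proof -
  have "\<And>x. le x x" "\<And>x. le bt x"
    using assms(1) by (simp_all add: cont_sigma_monad_def omega_cppo_def)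
  then show ?thesis
    using cont_sigma_monad_bind_mono[OF assms(1)] cont_sigma_monad_sop_mono[OF assms(1)] assms(3,4)
    by (rule eval_mono) simp_all
qed

end
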